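(* Let $(a_0,\ldots,a_n)$ be a finite sequence of positive integers. For every $\varepsilon>0$ there is $m_0>0$ such that for every integer $m\ge m_0$ and every positive integer $N$, $$|\Phi^-(\beta^N)-\Phi^-(\beta^{N+1})|<\frac{\varepsilon}{2}.$$
   Context: For positive integers $d_0,d_1,\ldots$, $[d_0,d_1,d_2,\ldots]$ denotes the continued fraction $\cfrac{1}{d_0+\cfrac{1}{d_1+\cfrac{1}{d_2+\cdots}}}$, and for $\beta=[d_0,d_1,\ldots]$ we write $\alpha_j(\beta)=[d_j,d_{j+1},\ldots]$. $\Phi(\beta)=\sum_{k\ge 0}\alpha_0(\beta)\cdots\alpha_{k-1}(\beta)\log\frac{1}{\alpha_k(\beta)}$ is the Yoccoz Brjuno function. For integers $m\ge1$, $N\ge1$, $\beta^N$ is the number whose digits (indexed from $0$) are $a_0,\ldots,a_n$ in positions $0,\ldots,n$, $N$ in position $n+m$, and $1$ in all other positions. For such $\beta$ (with $m$ fixed), $\Phi^-(\beta)=\Phi(\beta)-\alpha_0(\beta)\cdots\alpha_{n+m-1}(\beta)\log\frac{1}{\alpha_{n+m}(\beta)}$. *)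

theory Defs
  imports Complex_Main
begin

fun cf_trunc :: "(nat \<Rightarrow> nat) \<Rightarrow> nat \<Rightarrow> real" where
  "cf_trunc d 0 = 0"
| "cf_trunc d (Suc k) = 1 / (real (d 0) + cf_trunc (\<lambda>i. d (Suc i)) k)"

definition cf :: "(nat \<Rightarrow> nat) \<Rightarrow> real" where
  "cf d = lim (\<lambda>k. cf_trunc d k)"

definition cf_alpha :: "(nat \<Rightarrow> nat) \<Rightarrow> nat \<Rightarrow> real" where
  "cf_alpha d j = cf (\<lambda>i. d (i + j))"

text \<open>Yoccoz Brjuno function, in terms of the digit sequence of beta.\<close>
definition brjuno :: "(nat \<Rightarrow> nat) \<Rightarrow> real" where
  "brjuno d = (\<Sum>k. (\<Prod>i<k. cf_alpha d i) * ln (1 / cf_alpha d k))"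

text \<open>Digits of beta^N: a_0..a_n in positions 0..n (n = length a - 1),
  N in position n+m, 1 elsewhere.\<close>
definition beta_digits :: "nat list \<Rightarrow> nat \<Rightarrow> nat \<Rightarrow> nat \<Rightarrow> nat" where
  "beta_digits a m N i =
     (if i < length a then a ! i else if i = length a - 1 + m then N else 1)"

text \<open>Phi^- with parameters n = length a - 1 and m.\<close>
definition brjuno_minus :: "nat list \<Rightarrow> nat \<Rightarrow> (nat \<Rightarrow> nat) \<Rightarrow> real" where
  "brjuno_minus a m d = brjuno d
     - (\<Prod>i< length a - 1 + m. cf_alpha d i) * ln (1 / cf_alpha d (length a - 1 + m))"

end

theory Submission
  imports Defs
begin

text \<open>The numbers \<open>\<alpha>\<^sub>j = \<alpha>\<^sub>j(\<beta>)\<close> solve \<open>\<alpha>\<^sub>j = 1 / (d\<^sub>j + \<alpha>\<^sub>j\<^sub>+\<^sub>1)\<close> with digits \<open>d\<^sub>j \<ge> 1\<close>,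
  so \<open>\<alpha>\<^sub>j \<alpha>\<^sub>j\<^sub>+\<^sub>1 \<le> 1/2\<close> and a product of \<open>k\<close> consecutive \<open>\<alpha>\<^sub>j\<close> is at most \<open>2 (3/4)\<^sup>k\<close>.
  The digit sequences of \<open>\<beta>\<^sup>N\<close> and \<open>\<beta>\<^sup>N\<^sup>+\<^sup>1\<close> differ only at \<open>p = n + m\<close>; running the
  recurrence backwards from \<open>p\<close>, the difference of the two \<open>\<alpha>\<^sub>j\<close> shrinks by the factor
  \<open>\<alpha>\<^sub>j\<close> at each step, so it is \<open>O((3/4)\<^sup>p\<^sup>-\<^sup>j)\<close>. Hence the first \<open>K\<close> terms of the two
  Brjuno series differ by \<open>O(K\<^sup>2 (3/4)\<^sup>p\<^sup>-\<^sup>K)\<close>, while every term of index \<open>k \<ge> K > n\<close>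
  other than the removed \<open>p\<close>-th one has digit \<open>1\<close> and is at most \<open>2 (3/4)\<^sup>k\<close>. Choosing
  \<open>K\<close> first and then \<open>m\<close> large makes the difference small, uniformly in \<open>N\<close>.\<close>

lemma cf_trunc_nonneg: "0 \<le> cf_trunc d k"
  by (induction k arbitrary: d) auto

definition inv_golden_ratio :: real where
  "inv_golden_ratio = (sqrt 5 - 1) / 2"

lemma inv_golden_ratio_bounds: "0 < inv_golden_ratio" "inv_golden_ratio < 1"
proof -
  have "2 < sqrt 5" by (rule real_less_rsqrt) simp
  moreover have "sqrt 5 < 3" by (rule real_sqrt_less_mono[of 5 9, simplified])
  ultimately show "0 < inv_golden_ratio" "inv_golden_ratio < 1"
    by (auto simp: inv_golden_ratio_def)
qed

lemma inv_golden_ratio_fixpoint: "1 / (1 + inv_golden_ratio) = inv_golden_ratio"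
proof -
  have "inv_golden_ratio * (1 + inv_golden_ratio) = 1"
    unfolding inv_golden_ratio_def by (simp add: field_simps)
  with inv_golden_ratio_bounds show ?thesis by (simp add: field_simps)
qed

lemma inv_one_plus_contraction:
  fixes y :: real
  assumes "0 \<le> y"
  shows "\<bar>1 / (1 + y) - inv_golden_ratio\<bar> \<le> inv_golden_ratio * \<bar>y - inv_golden_ratio\<bar>"
proof -
  let ?g = inv_golden_ratio
  have "1 / (1 + y) - ?g = 1 / (1 + y) - 1 / (1 + ?g)"
    by (simp add: inv_golden_ratio_fixpoint)
  also have "\<dots> = (?g - y) * (1 / (1 + y)) * (1 / (1 + ?g))"
    using assms inv_golden_ratio_bounds by (simp add: field_simps)
  also have "\<dots> = (?g - y) * (1 / (1 + y)) * ?g"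
    by (simp add: inv_golden_ratio_fixpoint)
  finally have "\<bar>1 / (1 + y) - ?g\<bar> = ?g * \<bar>y - ?g\<bar> * (1 / (1 + y))"
    using assms inv_golden_ratio_bounds by (simp add: abs_mult abs_minus_commute)
  also have "\<dots> \<le> ?g * \<bar>y - ?g\<bar> * 1"
    using assms inv_golden_ratio_bounds by (intro mult_left_mono) auto
  finally show ?thesis by simp
qed

lemma cf_trunc_ones_tendsto: "cf_trunc (\<lambda>_. 1) \<longlonglongrightarrow> inv_golden_ratio"
proof -
  let ?g = inv_golden_ratio
  have dist_le: "\<bar>cf_trunc (\<lambda>_. 1) k - ?g\<bar> \<le> ?g ^ k" for k
  proof (induction k)
    case 0
    show ?case using inv_golden_ratio_bounds by simp
  next
    case (Suc k)
    have "\<bar>cf_trunc (\<lambda>_. 1) (Suc k) - ?g\<bar> \<le> ?g * \<bar>cf_trunc (\<lambda>_. 1) k - ?g\<bar>"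
      using inv_one_plus_contraction[OF cf_trunc_nonneg] by simp
    also have "\<dots> \<le> ?g * ?g ^ k"
      using Suc inv_golden_ratio_bounds by (simp add: mult_left_mono)
    finally show ?case by simp
  qed
  have "(\<lambda>k. ?g ^ k) \<longlonglongrightarrow> 0"
    using inv_golden_ratio_bounds by (intro LIMSEQ_power_zero) simp
  then have "(\<lambda>k. cf_trunc (\<lambda>_. 1) k - ?g) \<longlonglongrightarrow> 0"
    by (rule tendsto_0_le[where K = 1]) (use dist_le inv_golden_ratio_bounds in simp)
  then show ?thesis by (rule LIM_zero_cancel)
qed

lemma cf_trunc_Suc_tendsto:
  assumes "cf_trunc (\<lambda>i. d (Suc i)) \<longlonglongrightarrow> l" and "real (d 0) + l \<noteq> 0"
  shows "cf_trunc d \<longlonglongrightarrow> 1 / (real (d 0) + l)"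
proof -
  have "(\<lambda>k. 1 / (real (d 0) + cf_trunc (\<lambda>i. d (Suc i)) k)) \<longlonglongrightarrow> 1 / (real (d 0) + l)"
    by (rule tendsto_divide[OF tendsto_const tendsto_add[OF tendsto_const assms(1)] assms(2)])
  then have "(\<lambda>k. cf_trunc d (Suc k)) \<longlonglongrightarrow> 1 / (real (d 0) + l)"
    by simp
  then show ?thesis by (rule LIMSEQ_imp_Suc)
qed

lemma cf_trunc_tendsto_cf:
  assumes "\<And>i. 1 \<le> d i" and "\<And>i. L \<le> i \<Longrightarrow> d i = 1"
  shows "cf_trunc d \<longlonglongrightarrow> cf d \<and> 0 < cf d"
  using assms
proof (induction L arbitrary: d)
  case 0
  then have "d = (\<lambda>_. 1)" by auto
  then show ?case
    using cf_trunc_ones_tendsto inv_golden_ratio_bounds by (simp add: cf_def limI)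
next
  case (Suc L)
  then have "cf_trunc (\<lambda>i. d (Suc i)) \<longlonglongrightarrow> cf (\<lambda>i. d (Suc i))" "0 < cf (\<lambda>i. d (Suc i))"
    by auto
  then have "cf_trunc d \<longlonglongrightarrow> 1 / (real (d 0) + cf (\<lambda>i. d (Suc i)))"
    by (intro cf_trunc_Suc_tendsto) (auto simp: add_nonneg_pos)
  moreover from this have "cf d = 1 / (real (d 0) + cf (\<lambda>i. d (Suc i)))"
    by (simp add: cf_def limI)
  ultimately show ?case using \<open>0 < cf (\<lambda>i. d (Suc i))\<close> by (simp add: add_nonneg_pos)
qed

lemma cf_Suc:
  assumes "\<And>i. 1 \<le> d i" and "\<And>i. L \<le> i \<Longrightarrow> d i = 1"
  shows "cf d = 1 / (real (d 0) + cf (\<lambda>i. d (Suc i)))"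
proof -
  have "cf_trunc (\<lambda>i. d (Suc i)) \<longlonglongrightarrow> cf (\<lambda>i. d (Suc i))" "0 < cf (\<lambda>i. d (Suc i))"
    using cf_trunc_tendsto_cf[of "\<lambda>i. d (Suc i)" L] assms by auto
  then have "cf_trunc d \<longlonglongrightarrow> 1 / (real (d 0) + cf (\<lambda>i. d (Suc i)))"
    by (intro cf_trunc_Suc_tendsto) (auto simp: add_nonneg_pos)
  moreover have "cf_trunc d \<longlonglongrightarrow> cf d"
    using cf_trunc_tendsto_cf assms by blast
  ultimately show ?thesis using LIMSEQ_unique by blast
qed

locale cf_tail_seq =
  fixes x :: "nat \<Rightarrow> real" and d :: "nat \<Rightarrow> nat"
  assumes tail_Suc: "x j = 1 / (real (d j) + x (Suc j))"
    and tail_pos: "0 < x j"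
    and digit_ge_1: "1 \<le> d j"

lemma cf_tail_seq_cf_alpha:
  assumes "\<And>i. 1 \<le> d i" and "\<And>i. L \<le> i \<Longrightarrow> d i = 1"
  shows "cf_tail_seq (cf_alpha d) d"
proof
  fix j
  have "\<And>i. 1 \<le> d (i + j)" "\<And>i. L \<le> i \<Longrightarrow> d (i + j) = 1"
    using assms by auto
  then show "cf_alpha d j = 1 / (real (d j) + cf_alpha d (Suc j))"
    and "0 < cf_alpha d j"
    using cf_Suc[of "\<lambda>i. d (i + j)" L] cf_trunc_tendsto_cf[of "\<lambda>i. d (i + j)" L]
    by (simp_all add: cf_alpha_def)
  show "1 \<le> d j" by (rule assms(1))
qed

definition brjuno_term :: "(nat \<Rightarrow> real) \<Rightarrow> nat \<Rightarrow> real" where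
  "brjuno_term x k = (\<Prod>i<k. x i) * ln (1 / x k)"

lemma brjuno_eq_suminf_brjuno_term: "brjuno d = suminf (brjuno_term (cf_alpha d))"
  by (simp add: brjuno_def brjuno_term_def[abs_def])

context cf_tail_seq
begin

lemma tail_le_1: "x j \<le> 1"
proof -
  have "1 \<le> real (d j) + x (Suc j)" using digit_ge_1[of j] tail_pos[of "Suc j"] by linarith
  then show ?thesis using tail_Suc[of j] by simp
qed

lemma tail_ge: "1 / (real (d j) + 1) \<le> x j"
proof -
  have "0 < real (d j) + x (Suc j)" "real (d j) + x (Suc j) \<le> real (d j) + 1"
    using tail_pos[of "Suc j"] tail_le_1[of "Suc j"] by auto
  then show ?thesis using tail_Suc[of j] by (simp add: frac_le)
qed

lemma tail_mult_tail_Suc_le: "x j * x (Suc j) \<le> 1 / 2"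
proof -
  let ?y = "x (Suc j)"
  have "x j * ?y = ?y / (real (d j) + ?y)" using tail_Suc[of j] by simp
  also have "\<dots> \<le> ?y / (1 + ?y)"
    using tail_pos[of "Suc j"] digit_ge_1[of j] by (intro divide_left_mono) auto
  also have "\<dots> \<le> 1 / 2"
    using tail_pos[of "Suc j"] tail_le_1[of "Suc j"] by (simp add: field_simps)
  finally show ?thesis .
qed

lemma prod_tail_nonneg: "0 \<le> (\<Prod>j\<in>A. x j)"
  using tail_pos by (simp add: prod_nonneg less_imp_le)

lemma prod_tail_le_1: "(\<Prod>j\<in>A. x j) \<le> 1"
  using tail_pos tail_le_1 by (simp add: prod_le_1 less_imp_le)

text \<open>Each pair of consecutive factors contributes at most \<open>1/2 < (3/4)\<^sup>2\<close>.\<close>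

lemma prod_tail_le: "(\<Prod>j\<in>{s..<s + k}. x j) \<le> 2 * (3/4) ^ k"
proof (induction k rule: nat_induct2)
  case 0
  show ?case by simp
next
  case 1
  show ?case using tail_le_1[of s] by simp
next
  case (step k)
  have "(\<Prod>j\<in>{s..<s + (k + 2)}. x j) = (\<Prod>j\<in>{s..<s + k}. x j) * (x (s + k) * x (Suc (s + k)))"
    by (simp add: prod.atLeastLessThan_Suc mult.assoc)
  also have "\<dots> \<le> (2 * (3/4) ^ k) * (1/2)"
    using step tail_mult_tail_Suc_le tail_pos
    by (intro mult_mono) (auto intro: less_imp_le)
  also have "\<dots> \<le> 2 * (3/4) ^ (k + 2)" by simp
  finally show ?case .
qed

lemma ln_inv_tail_nonneg: "0 \<le> ln (1 / x k)"
  using tail_pos[of k] tail_le_1[of k] by simp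

lemma ln_inv_tail_le: "ln (1 / x k) \<le> ln (real (d k) + 1)"
proof -
  have "1 / x k \<le> real (d k) + 1"
    using tail_ge[of k] tail_pos[of k] by (simp add: field_simps)
  then show ?thesis using tail_pos[of k] by simp
qed

lemma brjuno_term_nonneg: "0 \<le> brjuno_term x k"
  unfolding brjuno_term_def using prod_tail_nonneg ln_inv_tail_nonneg by simp

lemma brjuno_term_le: "brjuno_term x k \<le> 2 * (3/4) ^ k * ln (real (d k) + 1)"
proof -
  have "(\<Prod>i<k. x i) \<le> 2 * (3/4) ^ k"
    using prod_tail_le[of 0 k] by (simp add: atLeast0LessThan)
  then show ?thesis
    unfolding brjuno_term_def
    using ln_inv_tail_nonneg[of k] ln_inv_tail_le[of k] prod_tail_nonneg
    by (intro mult_mono) auto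
qed

lemma brjuno_term_summable:
  assumes "\<And>i. d i \<le> D"
  shows "summable (brjuno_term x)"
proof (rule summable_comparison_test)
  show "\<exists>N. \<forall>n\<ge>N. norm (brjuno_term x n) \<le> 2 * ln (real D + 1) * (3/4) ^ n"
  proof (intro exI allI impI)
    fix n :: nat
    have "norm (brjuno_term x n) = brjuno_term x n" using brjuno_term_nonneg[of n] by simp
    also have "\<dots> \<le> 2 * (3/4) ^ n * ln (real (d n) + 1)" by (rule brjuno_term_le)
    also have "\<dots> \<le> 2 * (3/4) ^ n * ln (real D + 1)"
      using assms[of n] by (intro mult_left_mono) auto
    finally show "norm (brjuno_term x n) \<le> 2 * ln (real D + 1) * (3/4) ^ n"
      by (simp add: mult_ac)
  qed
  show "summable (\<lambda>n. 2 * ln (real D + 1) * (3/4::real) ^ n)"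
    by (intro summable_mult summable_geometric) simp
qed

lemma brjuno_term_le_of_digit_1:
  assumes "d k = 1"
  shows "brjuno_term x k \<le> 2 * (3/4) ^ k"
proof -
  have "ln (real (d k) + 1) \<le> 1" using assms ln_le_minus_one[of 2] by simp
  then have "2 * (3/4) ^ k * ln (real (d k) + 1) \<le> 2 * (3/4::real) ^ k"
    by (simp add: mult_left_le)
  with brjuno_term_le[of k] show ?thesis by linarith
qed

end

lemma abs_prod_diff_le_sum_abs_diff:
  fixes f g :: "nat \<Rightarrow> real"
  assumes "\<And>i. 0 \<le> f i" "\<And>i. f i \<le> 1" "\<And>i. 0 \<le> g i" "\<And>i. g i \<le> 1"
  shows "\<bar>(\<Prod>i<k. f i) - (\<Prod>i<k. g i)\<bar> \<le> (\<Sum>i<k. \<bar>f i - g i\<bar>)"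
proof (induction k)
  case 0
  show ?case by simp
next
  case (Suc k)
  let ?F = "\<Prod>i<k. f i" and ?G = "\<Prod>i<k. g i"
  have G: "0 \<le> ?G" "?G \<le> 1" using assms by (auto intro: prod_nonneg prod_le_1)
  have "(\<Prod>i<Suc k. f i) - (\<Prod>i<Suc k. g i) = (?F - ?G) * f k + ?G * (f k - g k)"
    by (simp add: algebra_simps)
  then have "\<bar>(\<Prod>i<Suc k. f i) - (\<Prod>i<Suc k. g i)\<bar> \<le> \<bar>?F - ?G\<bar> * \<bar>f k\<bar> + \<bar>?G\<bar> * \<bar>f k - g k\<bar>"
    by (metis abs_mult abs_triangle_ineq)
  also have "\<dots> \<le> \<bar>?F - ?G\<bar> * 1 + 1 * \<bar>f k - g k\<bar>"
    using assms G by (intro add_mono mult_mono) auto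
  also have "\<dots> \<le> (\<Sum>i<Suc k. \<bar>f i - g i\<bar>)" using Suc by simp
  finally show ?case .
qed

lemma abs_ln_diff_le:
  fixes x y c :: real
  assumes "0 < c" "c \<le> x" "c \<le> y"
  shows "\<bar>ln x - ln y\<bar> \<le> \<bar>x - y\<bar> / c"
proof -
  have "ln u - ln v \<le> \<bar>u - v\<bar> / c" if "c \<le> u" "c \<le> v" for u v
  proof -
    have "ln u - ln v = ln (u / v)" using that assms by (simp add: ln_div)
    also have "\<dots> \<le> u / v - 1" using that assms by (intro ln_le_minus_one) simp
    also have "\<dots> = (u - v) / v" using that assms by (simp add: field_simps)
    also have "\<dots> \<le> \<bar>u - v\<bar> / v" using that assms by (intro divide_right_mono) auto
    also have "\<dots> \<le> \<bar>u - v\<bar> / c" using that assms by (intro divide_left_mono) auto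
    finally show ?thesis .
  qed
  from this[of x y] this[of y x] assms show ?thesis by (simp add: abs_le_iff abs_minus_commute)
qed

lemma abs_suminf_minus_term_le:
  fixes w g :: "nat \<Rightarrow> real"
  assumes "summable w" "summable g" "\<And>n. 0 \<le> g n" "K \<le> p"
    and head: "\<And>k. k < K \<Longrightarrow> \<bar>w k\<bar> \<le> H"
    and tail: "\<And>n. n + K \<noteq> p \<Longrightarrow> \<bar>w (n + K)\<bar> \<le> g n"
  shows "\<bar>suminf w - w p\<bar> \<le> real K * H + suminf g"
proof -
  define u where "u = (\<lambda>k. if k = p then 0 else w k)"
  have "(\<lambda>k. w k - (if k = p then w k else 0)) sums (suminf w - w p)"
    using assms(1) by (intro sums_diff sums_single) (auto simp: summable_sums)
  moreover have "(\<lambda>k. w k - (if k = p then w k else 0)) = u" by (auto simp: u_def)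
  ultimately have "u sums (suminf w - w p)" by simp
  then have "summable u" and u_sum: "suminf u = suminf w - w p" by (auto simp: sums_iff)
  have u_tail: "\<bar>u (n + K)\<bar> \<le> g n" for n
    using tail[of n] assms(3) by (auto simp: u_def)
  have "summable (\<lambda>n. \<bar>u (n + K)\<bar>)"
    using u_tail by (intro summable_comparison_test[OF _ assms(2)]) auto
  then have "\<bar>\<Sum>n. u (n + K)\<bar> \<le> suminf g"
    using summable_rabs u_tail assms(2) by (meson order_trans suminf_le)
  moreover have "\<bar>\<Sum>k<K. u k\<bar> \<le> real K * H"
  proof -
    have "\<bar>\<Sum>k<K. u k\<bar> \<le> (\<Sum>k<K. \<bar>u k\<bar>)" by (rule sum_abs)
    also have "\<dots> \<le> (\<Sum>k<K. H)"
      using head assms(4) by (intro sum_mono) (auto simp: u_def)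
    finally show ?thesis by simp
  qed
  moreover have "suminf u = (\<Sum>n. u (n + K)) + (\<Sum>k<K. u k)"
    by (rule suminf_split_initial_segment[OF \<open>summable u\<close>])
  ultimately show ?thesis unfolding u_sum by linarith
qed

locale cf_tail_seq_pair =
  A: cf_tail_seq xA dA + B: cf_tail_seq xB dB
  for xA dA xB dB +
  fixes p :: nat
  assumes digits_eq: "i \<noteq> p \<Longrightarrow> dA i = dB i"
begin

lemma tail_diff_le_prod:
  assumes "i \<le> p"
  shows "\<bar>xA i - xB i\<bar> \<le> (\<Prod>j\<in>{i..<p}. xA j)"
  using assms
proof (induction i rule: inc_induct)
  case base
  show ?case
    using A.tail_pos[of p] B.tail_pos[of p] A.tail_le_1[of p] B.tail_le_1[of p] by simp
next
  case (step i)
  let ?d = "real (dA i)"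
  have "0 < ?d + xA (Suc i)" "0 < ?d + xB (Suc i)"
    using A.tail_pos[of "Suc i"] B.tail_pos[of "Suc i"] by (auto simp: add_nonneg_pos)
  then have "1 / (?d + xA (Suc i)) - 1 / (?d + xB (Suc i))
      = (xB (Suc i) - xA (Suc i)) * (1 / (?d + xA (Suc i))) * (1 / (?d + xB (Suc i)))"
    by (simp add: field_simps)
  then have "xA i - xB i = (xB (Suc i) - xA (Suc i)) * xA i * xB i"
    using A.tail_Suc[of i] B.tail_Suc[of i] digits_eq[of i] step(2) by simp
  then have "\<bar>xA i - xB i\<bar> = \<bar>xA (Suc i) - xB (Suc i)\<bar> * xA i * xB i"
    using A.tail_pos[of i] B.tail_pos[of i] by (simp add: abs_mult abs_minus_commute)
  also have "\<dots> \<le> (\<Prod>j\<in>{Suc i..<p}. xA j) * xA i * 1"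
    using step.IH A.tail_pos[of i] B.tail_pos[of i] B.tail_le_1[of i]
    by (intro mult_mono) auto
  also have "\<dots> = (\<Prod>j\<in>{i..<p}. xA j)"
    using step(2) by (simp add: prod.atLeast_Suc_lessThan)
  finally show ?case .
qed

lemma tail_diff_le:
  assumes "i \<le> p"
  shows "\<bar>xA i - xB i\<bar> \<le> 2 * (3/4) ^ (p - i)"
  using tail_diff_le_prod[OF assms] A.prod_tail_le[of i "p - i"] assms by simp

lemma prod_tail_diff_le:
  assumes "k \<le> p"
  shows "\<bar>(\<Prod>i<k. xA i) - (\<Prod>i<k. xB i)\<bar> \<le> real k * (2 * (3/4) ^ (p - k))"
proof -
  have "\<bar>xA i - xB i\<bar> \<le> 2 * (3/4) ^ (p - k)" if "i < k" for i
  proof -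
    have "\<bar>xA i - xB i\<bar> \<le> 2 * (3/4) ^ (p - i)" using that assms by (intro tail_diff_le) simp
    also have "\<dots> \<le> 2 * (3/4) ^ (p - k)" using that by (intro mult_left_mono power_decreasing) auto
    finally show ?thesis .
  qed
  then have "(\<Sum>i<k. \<bar>xA i - xB i\<bar>) \<le> real k * (2 * (3/4) ^ (p - k))"
    using sum_mono[of "{..<k}" "\<lambda>i. \<bar>xA i - xB i\<bar>" "\<lambda>_. 2 * (3/4) ^ (p - k)"] by simp
  moreover have "\<bar>(\<Prod>i<k. xA i) - (\<Prod>i<k. xB i)\<bar> \<le> (\<Sum>i<k. \<bar>xA i - xB i\<bar>)"
    using A.tail_pos B.tail_pos A.tail_le_1 B.tail_le_1
    by (intro abs_prod_diff_le_sum_abs_diff) (auto intro: less_imp_le)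
  ultimately show ?thesis by linarith
qed

lemma ln_inv_tail_diff_le:
  assumes "k \<noteq> p" and "dA k \<le> D"
  shows "\<bar>ln (1 / xA k) - ln (1 / xB k)\<bar> \<le> (real D + 1) * \<bar>xA k - xB k\<bar>"
proof -
  have "1 / (real D + 1) \<le> xA k" "1 / (real D + 1) \<le> xB k"
    using A.tail_ge[of k] B.tail_ge[of k] digits_eq[of k] assms
    by (auto intro: order_trans[rotated] simp: frac_le)
  then show ?thesis
    using abs_ln_diff_le[of "1 / (real D + 1)" "xB k" "xA k"] A.tail_pos[of k] B.tail_pos[of k]
    by (simp add: ln_div abs_minus_commute mult.commute)
qed

lemma brjuno_term_diff_le:
  assumes "k < p" and "dA k \<le> D"
  shows "\<bar>brjuno_term xA k - brjuno_term xB k\<bar>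
    \<le> 2 * (3/4) ^ (p - k) * (real k * ln (real D + 1) + (real D + 1))"
proof -
  define E :: real where "E = 2 * (3/4) ^ (p - k)"
  define PA PB where "PA = (\<Prod>i<k. xA i)" and "PB = (\<Prod>i<k. xB i)"
  define lA lB where "lA = ln (1 / xA k)" and "lB = ln (1 / xB k)"
  have PA_PB: "\<bar>PA - PB\<bar> \<le> real k * E"
    unfolding PA_def PB_def E_def using assms(1) by (intro prod_tail_diff_le) simp
  have "\<bar>lA - lB\<bar> \<le> (real D + 1) * \<bar>xA k - xB k\<bar>"
    unfolding lA_def lB_def using assms by (intro ln_inv_tail_diff_le) auto
  also have "\<dots> \<le> (real D + 1) * E"
    unfolding E_def using tail_diff_le[of k] assms(1) by (intro mult_left_mono) auto
  finally have lA_lB: "\<bar>lA - lB\<bar> \<le> (real D + 1) * E" .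
  have "ln (real (dA k) + 1) \<le> ln (real D + 1)" using assms(2) by simp
  then have lA: "0 \<le> lA" "lA \<le> ln (real D + 1)"
    using A.ln_inv_tail_nonneg[of k] order_trans[OF A.ln_inv_tail_le[of k]] unfolding lA_def
    by auto
  have PB: "0 \<le> PB" "PB \<le> 1"
    unfolding PB_def using B.prod_tail_nonneg B.prod_tail_le_1 by auto
  have "brjuno_term xA k - brjuno_term xB k = (PA - PB) * lA + PB * (lA - lB)"
    unfolding brjuno_term_def PA_def PB_def lA_def lB_def by (simp add: algebra_simps)
  then have "\<bar>brjuno_term xA k - brjuno_term xB k\<bar> \<le> \<bar>PA - PB\<bar> * \<bar>lA\<bar> + \<bar>PB\<bar> * \<bar>lA - lB\<bar>"
    by (metis abs_mult abs_triangle_ineq)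
  also have "\<dots> \<le> (real k * E) * ln (real D + 1) + 1 * ((real D + 1) * E)"
    using PA_PB lA_lB lA PB by (intro add_mono mult_mono) auto
  finally show ?thesis unfolding E_def by (simp add: algebra_simps)
qed

lemma brjuno_sum_except_diff_le:
  assumes digits_le: "\<And>i. i \<noteq> p \<Longrightarrow> dA i \<le> D"
    and digits_1: "\<And>i. K \<le> i \<Longrightarrow> i \<noteq> p \<Longrightarrow> dA i = 1"
    and "K < p"
  shows "\<bar>(suminf (brjuno_term xA) - brjuno_term xA p) - (suminf (brjuno_term xB) - brjuno_term xB p)\<bar>
    \<le> 2 * real K * (real K * ln (real D + 1) + (real D + 1)) * (3/4) ^ (p - K) + 8 * (3/4) ^ K"
proof -
  let ?w = "\<lambda>k. brjuno_term xA k - brjuno_term xB k"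
  define g :: "nat \<Rightarrow> real" where "g n = 2 * (3/4) ^ K * (3/4) ^ n" for n
  have "\<And>i. dA i \<le> D + dA p" "\<And>i. dB i \<le> D + dB p"
    using digits_le digits_eq by (metis le_add1 le_add2 order_trans)+
  then have summable: "summable (brjuno_term xA)" "summable (brjuno_term xB)"
    by (auto intro: A.brjuno_term_summable B.brjuno_term_summable)
  have g_sum: "suminf g = 8 * (3/4) ^ K"
    unfolding g_def by (subst suminf_mult) (auto intro!: summable_geometric simp: suminf_geometric)
  have "\<bar>suminf ?w - ?w p\<bar>
    \<le> real K * (2 * (3/4) ^ (p - K) * (real K * ln (real D + 1) + (real D + 1))) + suminf g"
  proof (rule abs_suminf_minus_term_le)
    show "summable ?w" using summable by (rule summable_diff)
    show "summable g" unfolding g_def by (intro summable_mult summable_geometric) simp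
    show "0 \<le> g n" for n by (simp add: g_def)
    show "K \<le> p" using \<open>K < p\<close> by simp
  next
    fix k assume "k < K"
    then have "\<bar>?w k\<bar> \<le> 2 * (3/4) ^ (p - k) * (real k * ln (real D + 1) + (real D + 1))"
      using \<open>K < p\<close> digits_le by (intro brjuno_term_diff_le) auto
    also have "\<dots> \<le> 2 * (3/4) ^ (p - K) * (real K * ln (real D + 1) + (real D + 1))"
      using \<open>k < K\<close> by (intro mult_mono power_decreasing add_mono) auto
    finally show "\<bar>?w k\<bar> \<le> \<dots>" .
  next
    fix n assume "n + K \<noteq> p"
    then have "dA (n + K) = 1" "dB (n + K) = 1" using digits_1 digits_eq by auto
    then have "brjuno_term xA (n + K) \<le> g n" "brjuno_term xB (n + K) \<le> g n"
      using A.brjuno_term_le_of_digit_1[of "n + K"] B.brjuno_term_le_of_digit_1[of "n + K"]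
      by (simp_all add: g_def power_add mult_ac)
    then show "\<bar>?w (n + K)\<bar> \<le> g n"
      using A.brjuno_term_nonneg[of "n + K"] B.brjuno_term_nonneg[of "n + K"] by linarith
  qed
  then show ?thesis using suminf_diff[OF summable] g_sum by (simp add: algebra_simps)
qed

end

lemma beta_digits_ge_1:
  assumes "\<forall>x \<in> set a. 0 < x" and "1 \<le> N"
  shows "1 \<le> beta_digits a m N i"
  using assms by (auto simp: beta_digits_def Suc_le_eq)

lemma cf_tail_seq_beta_digits:
  assumes "\<forall>x \<in> set a. 0 < x" and "1 \<le> N"
  shows "cf_tail_seq (cf_alpha (beta_digits a m N)) (beta_digits a m N)"
  using assms by (intro cf_tail_seq_cf_alpha[where L = "length a + m + 1"] beta_digits_ge_1)
    (auto simp: beta_digits_def)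

lemma cf_tail_seq_pair_beta_digits:
  assumes "\<forall>x \<in> set a. 0 < x" and "1 \<le> N"
  shows "cf_tail_seq_pair (cf_alpha (beta_digits a m N)) (beta_digits a m N)
    (cf_alpha (beta_digits a m (N + 1))) (beta_digits a m (N + 1)) (length a - 1 + m)"
  using assms cf_tail_seq_beta_digits[of a N m] cf_tail_seq_beta_digits[of a "N + 1" m]
  by (auto simp: cf_tail_seq_pair_def cf_tail_seq_pair_axioms_def beta_digits_def)

lemma brjuno_minus_eq_suminf_brjuno_term:
  "brjuno_minus a m d
    = suminf (brjuno_term (cf_alpha d)) - brjuno_term (cf_alpha d) (length a - 1 + m)"
  by (simp add: brjuno_minus_def brjuno_eq_suminf_brjuno_term brjuno_term_def)

lemma brjuno_minus_beta_digits_diff_le: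
  assumes pos: "\<forall>x \<in> set a. 0 < x" and "length a \<le> K"
  shows "\<exists>C. \<forall>m N. K < m \<longrightarrow> 1 \<le> N \<longrightarrow>
    \<bar>brjuno_minus a m (beta_digits a m N) - brjuno_minus a m (beta_digits a m (N + 1))\<bar>
      \<le> C * (3/4) ^ m + 8 * (3/4) ^ K"
proof (intro exI allI impI)
  define D where "D = Max (insert 1 (set a))"
  define Q where "Q = 2 * real K * (real K * ln (real D + 1) + (real D + 1))"
  fix m N :: nat
  assume "K < m" "1 \<le> N"
  define p where "p = length a - 1 + m"
  interpret cf_tail_seq_pair "cf_alpha (beta_digits a m N)" "beta_digits a m N"
    "cf_alpha (beta_digits a m (N + 1))" "beta_digits a m (N + 1)" p
    unfolding p_def using pos \<open>1 \<le> N\<close> by (rule cf_tail_seq_pair_beta_digits)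
  have "beta_digits a m N i \<le> D" if "i \<noteq> p" for i
    using that unfolding D_def p_def beta_digits_def by (auto intro: Max_ge)
  moreover have "beta_digits a m N i = 1" if "K \<le> i" "i \<noteq> p" for i
    using that \<open>length a \<le> K\<close> unfolding p_def beta_digits_def by auto
  moreover have "K < p" using \<open>K < m\<close> by (simp add: p_def)
  ultimately have "\<bar>brjuno_minus a m (beta_digits a m N) - brjuno_minus a m (beta_digits a m (N + 1))\<bar>
      \<le> Q * (3/4) ^ (p - K) + 8 * (3/4) ^ K"
    unfolding brjuno_minus_eq_suminf_brjuno_term p_def[symmetric] Q_def
    by (rule brjuno_sum_except_diff_le)
  also have "(3/4::real) ^ (p - K) = (4/3) ^ K * (3/4) ^ p"
    using \<open>K < p\<close> by (simp add: power_diff power_divide field_simps)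
  also have "\<dots> \<le> (4/3) ^ K * (3/4) ^ m"
    by (intro mult_left_mono power_decreasing) (auto simp: p_def)
  finally show "\<bar>brjuno_minus a m (beta_digits a m N) - brjuno_minus a m (beta_digits a m (N + 1))\<bar>
      \<le> (Q * (4/3) ^ K) * (3/4) ^ m + 8 * (3/4) ^ K"
    unfolding Q_def by (simp add: mult_left_mono mult.assoc)
qed

theorem mainTheorem7:
  fixes a :: "nat list"
  assumes "a \<noteq> []" and "\<forall>x \<in> set a. x > 0"
  shows "\<forall>\<epsilon>::real. \<epsilon> > 0 \<longrightarrow> (\<exists>m0::nat. m0 > 0 \<and>
           (\<forall>m N. m \<ge> m0 \<longrightarrow> N \<ge> 1 \<longrightarrow>
              \<bar>brjuno_minus a m (beta_digits a m N) - brjuno_minus a m (beta_digits a m (N + 1))\<bar> < \<epsilon> / 2))"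
proof (intro allI impI)
  fix \<epsilon> :: real
  assume "\<epsilon> > 0"
  let ?diff = "\<lambda>m N. \<bar>brjuno_minus a m (beta_digits a m N) - brjuno_minus a m (beta_digits a m (N + 1))\<bar>"
  have geometric_small: "\<forall>\<^sub>F k in sequentially. c * (3/4::real) ^ k < \<epsilon> / 4" for c :: real
  proof (rule order_tendstoD(2))
    show "(\<lambda>k. c * (3/4::real) ^ k) \<longlonglongrightarrow> 0"
      by (intro tendsto_mult_right_zero LIMSEQ_power_zero) simp
  qed (use \<open>\<epsilon> > 0\<close> in simp)
  obtain K where K: "length a \<le> K" "8 * (3/4::real) ^ K < \<epsilon> / 4"
    using eventually_happens'[OF sequentially_bot
        eventually_conj[OF eventually_ge_at_top geometric_small[of 8]]] by blast
  obtain C where C: "\<And>m N. K < m \<Longrightarrow> 1 \<le> N \<Longrightarrow> ?diff m N \<le> C * (3/4) ^ m + 8 * (3/4) ^ K"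
    using brjuno_minus_beta_digits_diff_le[OF assms(2) K(1)] by blast
  obtain M where M: "\<And>m. M \<le> m \<Longrightarrow> C * (3/4::real) ^ m < \<epsilon> / 4"
    using geometric_small[of C] by (auto simp: eventually_sequentially)
  have "?diff m N < \<epsilon> / 2" if "M + K + 1 \<le> m" "1 \<le> N" for m N
    using C[of m N] M[of m] K(2) that by simp
  then show "\<exists>m0>0. \<forall>m N. m0 \<le> m \<longrightarrow> 1 \<le> N \<longrightarrow> ?diff m N < \<epsilon> / 2"
    by (intro exI[of _ "M + K + 1"]) auto
qed

end
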